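(* For $i=1,\dots,d$ let $\omega_i\subseteq\mathbb{R}$ be a nonempty open interval and $f_i:\omega_i\to\mathbb{R}$ a univariate function of Legendre type; let $\Omega=\prod_{i=1}^d\omega_i$ and $F(x)=\sum_{i=1}^d f_i(x_i)$, with Bregman divergence $D_F$. Let $A=\prod_{i=1}^d[a_i,b_i]$ be an axis-aligned box with $A\cap\Omega\neq\emptyset$, let $q\in\Omega$, and let $p$ be the Euclidean projection of $q$ onto $A$, i.e. $p_i=\min(\max(q_i,a_i),b_i)$. Then the Bregman projection divergence of $q$ onto $A$ satisfies $$\inf_{x\in A\cap\Omega} D_F(q\|x)=\sum_{i=1}^d D_{f_i}(q_i\|p_i)=D_F(q\|p).$$
   Context: A function $G:U\to\mathbb{R}$ on a nonempty open convex set $U$ is of Legendre type if it is differentiable, strictly convex, and, if $\partial U\neq\emptyset$, $\|\nabla G(x)\|\to\infty$ as $x\to\partial U$. The Bregman divergence generated by $G$ is $D_G(x\|y)=G(x)-G(y)-\langle\nabla G(y),x-y\rangle$; for univariate $f_i$ this is $D_{f_i}(s\|t)=f_i(s)-f_i(t)-f_i'(t)(s-t)$. *)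

theory Defs
  imports "HOL-Analysis.Analysis"
begin

definition strict_convex_on :: "'a::real_vector set \<Rightarrow> ('a \<Rightarrow> real) \<Rightarrow> bool" where
  "strict_convex_on U G \<longleftrightarrow> convex U \<and>
     (\<forall>x\<in>U. \<forall>y\<in>U. x \<noteq> y \<longrightarrow> (\<forall>t::real. 0 < t \<and> t < 1 \<longrightarrow>
        G ((1 - t) *\<^sub>R x + t *\<^sub>R y) < (1 - t) * G x + t * G y))"

definition legendre_type1 :: "real set \<Rightarrow> (real \<Rightarrow> real) \<Rightarrow> bool" where
  "legendre_type1 U G \<longleftrightarrow> U \<noteq> {} \<and> open U \<and> convex U \<and>
     (\<forall>x\<in>U. G differentiable (at x)) \<and> strict_convex_on U G \<and>
     (\<forall>z\<in>frontier U. filterlim (\<lambda>x. \<bar>deriv G x\<bar>) at_top (at z within U))"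

definition bregman :: "('a::real_normed_vector \<Rightarrow> real) \<Rightarrow> 'a \<Rightarrow> 'a \<Rightarrow> real" where
  "bregman G x y = G x - G y - frechet_derivative G (at y) (x - y)"

definition bregman1 :: "(real \<Rightarrow> real) \<Rightarrow> real \<Rightarrow> real \<Rightarrow> real" where
  "bregman1 f s t = f s - f t - deriv f t * (s - t)"

end

theory Submission
  imports Defs
begin

text \<open>Since F is separable and the box A is a product of intervals, the Bregman divergence
  D_F(q||x) splits into the sum of the univariate divergences D_{f_i}(q_i||x_i), and each summand
  can be minimised over [a_i, b_i] independently. For a differentiable convex f the three-point
  identity
    D_f(s||t) = D_f(s||p) + D_f(p||t) + (f'(p) - f'(t)) (s - p),
  with p the clamp of s to [a, b] and t \<in> [a, b], shows D_f(s||p) \<le> D_f(s||t): D_f(p||t)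
  is nonnegative by the tangent inequality, and the last term is nonnegative because f' is
  monotone and p lies between s and t.\<close>

lemma strict_convex_on_imp_convex_on:
  assumes "strict_convex_on U f"
  shows "convex_on U f"
proof (rule convex_onI)
  show "convex U" using assms unfolding strict_convex_on_def by simp
next
  fix t :: real and x y assume "0 < t" "t < 1" "x \<in> U" "y \<in> U"
  then show "f ((1 - t) *\<^sub>R x + t *\<^sub>R y) \<le> (1 - t) * f x + t * f y"
    using assms unfolding strict_convex_on_def
    by (cases "x = y") (auto simp: algebra_simps intro: less_imp_le)
qed

lemma legendre_type1_convex_on: "legendre_type1 U f \<Longrightarrow> convex_on U f"
  unfolding legendre_type1_def by (simp add: strict_convex_on_imp_convex_on)

lemma legendre_type1_open: "legendre_type1 U f \<Longrightarrow> open U"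
  unfolding legendre_type1_def by simp

lemma legendre_type1_differentiable: "legendre_type1 U f \<Longrightarrow> x \<in> U \<Longrightarrow> f differentiable (at x)"
  unfolding legendre_type1_def by simp

lemma bregman1_three_point:
  "bregman1 f s t = bregman1 f s p + bregman1 f p t + (deriv f p - deriv f t) * (s - p)"
  unfolding bregman1_def by (simp add: algebra_simps)

lemma bregman1_add_swap:
  "bregman1 f x y + bregman1 f y x = (deriv f y - deriv f x) * (y - x)"
  unfolding bregman1_def by (simp add: algebra_simps)

lemma bregman1_nonneg:
  fixes f :: "real \<Rightarrow> real"
  assumes "convex_on U f" "open U" "x \<in> U" "y \<in> U" "f differentiable (at y)"
  shows "0 \<le> bregman1 f x y"
proof -
  have "deriv f y * (x - y) \<le> f x - f y"
  proof (rule convex_on_imp_above_tangent[OF \<open>convex_on U f\<close>])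
    show "connected U" using \<open>convex_on U f\<close> by (simp add: convex_on_def convex_connected)
    show "y \<in> interior U" using assms by (simp add: interior_open)
    show "(f has_field_derivative deriv f y) (at y within U)"
      using \<open>f differentiable (at y)\<close>
      by (simp add: DERIV_deriv_iff_real_differentiable has_field_derivative_at_within)
  qed fact
  then show ?thesis unfolding bregman1_def by simp
qed

lemma convex_on_deriv_mono:
  fixes f :: "real \<Rightarrow> real"
  assumes "convex_on U f" "open U" "\<And>z. z \<in> U \<Longrightarrow> f differentiable (at z)"
    and "x \<in> U" "y \<in> U" "x \<le> y"
  shows "deriv f x \<le> deriv f y"
proof (cases "x = y")
  case False
  have "0 \<le> bregman1 f x y + bregman1 f y x"
    using bregman1_nonneg[of U f] assms by (simp add: add_nonneg_nonneg)
  then have "0 \<le> (deriv f y - deriv f x) * (y - x)" by (simp only: bregman1_add_swap)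
  with False \<open>x \<le> y\<close> show ?thesis by (simp add: zero_le_mult_iff)
qed simp

lemma bregman1_clamp_le:
  fixes f :: "real \<Rightarrow> real"
  assumes "convex_on U f" "open U" "\<And>z. z \<in> U \<Longrightarrow> f differentiable (at z)"
    and "s \<in> U" "t \<in> U" "min (max s a) b \<in> U" "a \<le> t" "t \<le> b"
  shows "bregman1 f s (min (max s a) b) \<le> bregman1 f s t"
proof -
  define p where "p = min (max s a) b"
  have "p \<in> U" using assms(6) by (simp add: p_def)
  note mono = convex_on_deriv_mono[OF assms(1-3)]
  have "0 \<le> (deriv f p - deriv f t) * (s - p)"
  proof -
    consider "s = p" | "s < p" "p \<le> t" | "p < s" "t \<le> p"
      using \<open>a \<le> t\<close> \<open>t \<le> b\<close> unfolding p_def by linarith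
    then show ?thesis
    proof cases
      case 2
      then have "deriv f p \<le> deriv f t" using mono \<open>p \<in> U\<close> \<open>t \<in> U\<close> by simp
      with \<open>s < p\<close> show ?thesis by (simp add: mult_nonpos_nonpos)
    next
      case 3
      then have "deriv f t \<le> deriv f p" using mono \<open>p \<in> U\<close> \<open>t \<in> U\<close> by simp
      with \<open>p < s\<close> show ?thesis by simp
    qed simp
  qed
  moreover have "0 \<le> bregman1 f p t" using bregman1_nonneg assms \<open>p \<in> U\<close> by blast
  ultimately show ?thesis using bregman1_three_point[of f s t p] by (simp add: p_def)
qed

lemma is_interval_clamp:
  fixes U :: "real set"
  assumes "is_interval U" "s \<in> U" "y \<in> U" "a \<le> y" "y \<le> b"
  shows "min (max s a) b \<in> U"
proof -
  have "min s y \<in> U" "max s y \<in> U" using assms by (simp_all add: min_def max_def)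
  moreover have "min s y \<le> min (max s a) b" "min (max s a) b \<le> max s y"
    using assms by linarith+
  ultimately show ?thesis using \<open>is_interval U\<close> unfolding is_interval_1 by blast
qed

lemma has_derivative_separable_sum:
  fixes f :: "'n::finite \<Rightarrow> real \<Rightarrow> real" and x :: "real ^ 'n"
  assumes "\<And>i. (f i has_field_derivative D i) (at (x $ i))"
  shows "((\<lambda>x. \<Sum>i\<in>UNIV. f i (x $ i)) has_derivative (\<lambda>h. \<Sum>i\<in>UNIV. D i * h $ i)) (at x)"
proof (rule has_derivative_sum)
  fix i :: 'n
  have "((\<lambda>x. x $ i) has_derivative (\<lambda>h. h $ i)) (at x)"
    using bounded_linear_vec_nth[of i] by (rule bounded_linear_imp_has_derivative)
  from has_derivative_compose[OF this has_field_derivative_imp_has_derivative[OF assms[of i]]]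
  show "((\<lambda>x. f i (x $ i)) has_derivative (\<lambda>h. D i * h $ i)) (at x)"
    by (simp add: o_def mult.commute)
qed

lemma bregman_separable_sum:
  fixes f :: "'n::finite \<Rightarrow> real \<Rightarrow> real" and x q :: "real ^ 'n"
  assumes "\<And>i. f i differentiable (at (x $ i))"
  shows "bregman (\<lambda>x. \<Sum>i\<in>UNIV. f i (x $ i)) q x = (\<Sum>i\<in>UNIV. bregman1 (f i) (q $ i) (x $ i))"
proof -
  have "((\<lambda>x. \<Sum>i\<in>UNIV. f i (x $ i)) has_derivative
          (\<lambda>h. \<Sum>i\<in>UNIV. deriv (f i) (x $ i) * h $ i)) (at x)"
    using assms by (intro has_derivative_separable_sum) (simp add: DERIV_deriv_iff_real_differentiable)
  from frechet_derivative_at[OF this, symmetric] show ?thesis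
    unfolding bregman_def bregman1_def by (simp add: sum_subtractf)
qed

theorem corollary1:
  fixes \<omega> :: "'n::finite \<Rightarrow> real set"
    and f :: "'n \<Rightarrow> real \<Rightarrow> real"
    and a b q :: "real ^ 'n"
  assumes intervals: "\<And>i. is_interval (\<omega> i) \<and> open (\<omega> i) \<and> \<omega> i \<noteq> {}"
    and legendre: "\<And>i. legendre_type1 (\<omega> i) (f i)"
    and meet: "{x. \<forall>i. a $ i \<le> x $ i \<and> x $ i \<le> b $ i} \<inter> {x. \<forall>i. x $ i \<in> \<omega> i} \<noteq> {}"
    and q: "\<forall>i. q $ i \<in> \<omega> i"
  shows "(let \<Omega> = {x. \<forall>i. x $ i \<in> \<omega> i};
              A = {x. \<forall>i. a $ i \<le> x $ i \<and> x $ i \<le> b $ i};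
              F = (\<lambda>x::real ^ 'n. \<Sum>i\<in>UNIV. f i (x $ i));
              p = (\<chi> i. min (max (q $ i) (a $ i)) (b $ i))
          in (INF x\<in>A \<inter> \<Omega>. bregman F q x) = (\<Sum>i\<in>UNIV. bregman1 (f i) (q $ i) (p $ i))
             \<and> (\<Sum>i\<in>UNIV. bregman1 (f i) (q $ i) (p $ i)) = bregman F q p)"
proof -
  define \<Omega> where "\<Omega> = {x::real ^ 'n. \<forall>i. x $ i \<in> \<omega> i}"
  define A where "A = {x::real ^ 'n. \<forall>i. a $ i \<le> x $ i \<and> x $ i \<le> b $ i}"
  define F where "F = (\<lambda>x::real ^ 'n. \<Sum>i\<in>UNIV. f i (x $ i))"
  define p where "p = (\<chi> i. min (max (q $ i) (a $ i)) (b $ i))"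
  note convex = legendre_type1_convex_on[OF legendre]
    and open_domain = legendre_type1_open[OF legendre]
    and diff = legendre_type1_differentiable[OF legendre]
  obtain y where "y \<in> A" "y \<in> \<Omega>" using meet unfolding A_def \<Omega>_def by blast
  then have "p \<in> A" "p \<in> \<Omega>"
    using intervals q by (auto simp: A_def \<Omega>_def p_def intro: order_trans is_interval_clamp)
  have split: "bregman F q x = (\<Sum>i\<in>UNIV. bregman1 (f i) (q $ i) (x $ i))" if "x \<in> \<Omega>" for x
    using that diff unfolding F_def \<Omega>_def by (intro bregman_separable_sum) simp
  have "bregman F q p \<le> bregman F q x" if "x \<in> A" "x \<in> \<Omega>" for x
    using that \<open>p \<in> \<Omega>\<close> q unfolding split[OF \<open>p \<in> \<Omega>\<close>] split[OF \<open>x \<in> \<Omega>\<close>]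
    by (auto simp: A_def \<Omega>_def p_def intro!: sum_mono bregman1_clamp_le[OF convex open_domain diff])
  then have "(INF x\<in>A \<inter> \<Omega>. bregman F q x) = bregman F q p"
    using \<open>p \<in> A\<close> \<open>p \<in> \<Omega>\<close> by (intro cInf_eq_minimum) auto
  then show ?thesis
    unfolding Let_def \<Omega>_def[symmetric] A_def[symmetric] F_def[symmetric] p_def[symmetric]
    using split[OF \<open>p \<in> \<Omega>\<close>] by simp
qed

end
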